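(* Let $\emptyset\neq\mathcal T\subset\binom{[n]}{3}$ be an intersecting family. Then either $\mathcal T$ is isomorphic to $\mathcal L$ or to $\mathcal T_0$, or there exist $T\in\mathcal T$ and $S\subset T$ with $|S|=2$ and $|\mathcal T(\overline S)|\leq 1$.
   Context: A family is intersecting if any two members intersect. For $S\subset[n]$, $\mathcal T(\overline S)=\{T\in\mathcal T: T\cap S=\emptyset\}$. $\mathcal L$ is the Fano plane: $\{1,2,3\},\{1,4,5\},\{1,6,7\},\{2,4,6\},\{2,5,7\},\{3,5,6\},\{3,4,7\}$. $\mathcal T_0\subset\binom{[6]}{3}$ is $\{\{1,2,3\},\{1,2,4\},\{3,4,5\},\{3,4,6\},\{1,5,6\},\{2,5,6\},\{1,3,5\},\{2,4,5\},\{1,4,6\},\{2,3,6\}\}$. Isomorphic means equal up to an injective relabeling of vertices. *)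

theory Defs
  imports Main
begin

definition intersecting :: "'a set set \<Rightarrow> bool" where
  "intersecting F \<longleftrightarrow> (\<forall>A\<in>F. \<forall>B\<in>F. A \<inter> B \<noteq> {})"

definition avoid :: "'a set set \<Rightarrow> 'a set \<Rightarrow> 'a set set" where
  "avoid F S = {T\<in>F. T \<inter> S = {}}"

definition fam_iso :: "'a set set \<Rightarrow> 'b set set \<Rightarrow> bool" where
  "fam_iso A B \<longleftrightarrow> (\<exists>f. inj_on f (\<Union>A) \<and> (\<lambda>X. f ` X) ` A = B)"

definition Fano :: "nat set set" where
  "Fano = {{1,2,3},{1,4,5},{1,6,7},{2,4,6},{2,5,7},{3,5,6},{3,4,7}}"

definition T0 :: "nat set set" where
  "T0 = {{1,2,3},{1,2,4},{3,4,5},{3,4,6},{1,5,6},{2,5,6},{1,3,5},{2,4,5},{1,4,6},{2,3,6}}"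

end

theory Submission
  imports Defs
begin

text \<open>
  Suppose every pair inside a member of the family is missed by at least two members.
  If two members share a pair \<open>{a,b}\<close>, looking again and again at the members that
  miss a given pair forces three disjoint pairs \<open>{a,b}, {c,d}, {x,y}\<close> carrying the ten
  triples of \<open>T0\<close>. Otherwise any two members meet in exactly one point, and the same
  forcing, started from one member \<open>{a,b,c}\<close>, produces the seven lines of a Fano plane.
  Both configurations are closed under blocking: a set of at most three of their vertices
  meeting every member is a member. So an intersecting family of triples containing a
  relabelled copy of either one coincides with that copy.
\<close>

lemma card3_eq:
  assumes "card E = 3" "a \<in> E" "b \<in> E" "c \<in> E" "a \<noteq> b" "a \<noteq> c" "b \<noteq> c"
  shows "E = {a,b,c}"
proof -
  have "finite E" using assms(1) by (metis card.infinite zero_neq_numeral)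
  then show ?thesis using assms by (intro card_subset_eq[symmetric]) auto
qed

lemma card3_not_four:
  assumes "card E = 3" "{a,b,c,d} \<subseteq> E" "distinct [a,b,c,d]"
  shows False
proof -
  have "finite E" using assms(1) by (metis card.infinite zero_neq_numeral)
  then have "card {a,b,c,d} \<le> card E" using assms(2) by (rule card_mono)
  then show False using assms by simp
qed

lemma card3_obtain_third:
  assumes "card E = 3" "c \<in> E" "d \<in> E" "c \<noteq> d"
  obtains x where "E = {c,d,x}" "x \<noteq> c" "x \<noteq> d"
proof -
  have "\<not> E \<subseteq> {c,d}"
    using card_mono[of "{c,d}" E] assms by auto
  then obtain x where "x \<in> E" "x \<noteq> c" "x \<noteq> d" by blast
  with assms card3_eq[of E c d x] that show ?thesis by blast
qed

lemma card3_obtain_rest: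
  assumes "card E = 3" "a \<in> E"
  obtains p q where "E = {a,p,q}" "distinct [a,p,q]"
proof -
  have "card (E - {a}) = 2" using assms by simp
  then obtain p q where pq: "E - {a} = {p,q}" "p \<noteq> q" by (auto simp: card_2_iff)
  then have "E = {a,p,q}" using assms(2) by blast
  moreover have "distinct [a,p,q]" using pq by auto
  ultimately show ?thesis by (rule that)
qed

lemma card3_point_and_two_of:
  assumes "card G = 3" "p \<in> G" "q \<in> G \<or> r \<in> G" "q \<in> G \<or> s \<in> G" "r \<in> G \<or> s \<in> G"
    and "distinct [p,q,r,s]"
  shows "G = {p,q,r} \<or> G = {p,q,s} \<or> G = {p,r,s}"
  using assms card3_eq[OF assms(1), of p q r] card3_eq[OF assms(1), of p q s]
    card3_eq[OF assms(1), of p r s] card3_not_four[OF assms(1), of p q r s] by auto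

lemma card3_point_and_transversal:
  assumes "card G = 3" "b \<in> G" "G \<inter> P \<noteq> {}" "G \<inter> Q \<noteq> {}" "b \<notin> P" "b \<notin> Q" "P \<inter> Q = {}"
  shows "\<exists>p\<in>P. \<exists>q\<in>Q. G = {b,p,q}"
proof -
  obtain p q where pq: "p \<in> G \<inter> P" "q \<in> G \<inter> Q" using assms(3,4) by blast
  then have "G = {b,p,q}" using assms card3_eq[OF assms(1), of b p q] by auto
  then show ?thesis using pq by blast
qed

definition blocking_closed :: "nat \<Rightarrow> 'a set set \<Rightarrow> bool" where
  "blocking_closed k P \<longleftrightarrow>
     (\<forall>X\<in>Pow (\<Union>P). card X \<le> k \<longrightarrow> (\<forall>L\<in>P. L \<inter> X \<noteq> {}) \<longrightarrow> X \<in> P)"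

lemma relabelled_blocking_closed_iso:
  assumes closed: "blocking_closed k P" and "0 < k"
    and inj: "inj_on f (\<Union>P)" and sub: "(\<lambda>L. f ` L) ` P \<subseteq> F"
    and meet: "intersecting F" and card_F: "\<And>E. E \<in> F \<Longrightarrow> card E = k"
  shows "fam_iso P F"
proof -
  have "E \<in> (\<lambda>L. f ` L) ` P" if E: "E \<in> F" for E
  proof -
    \<comment> \<open>the preimage of \<open>E\<close> blocks \<open>P\<close>, hence is a member of \<open>P\<close>\<close>
    define X where "X = \<Union>P \<inter> f -` E"
    have "finite E" using card_F[OF E] \<open>0 < k\<close> card.infinite by fastforce
    have "card X \<le> card E"
      using card_inj_on_le[OF inj_on_subset[OF inj] _ \<open>finite E\<close>] by (auto simp: X_def)
    moreover have "L \<inter> X \<noteq> {}" if L: "L \<in> P" for L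
    proof -
      have "f ` L \<in> F" using sub L by blast
      then obtain l where "l \<in> L" "f l \<in> E"
        using meet E unfolding intersecting_def by blast
      then show ?thesis using L by (auto simp: X_def)
    qed
    ultimately have "X \<in> P"
      using closed card_F[OF E] unfolding blocking_closed_def by (simp add: X_def)
    then have "f ` X \<in> F" using sub by blast
    then have "card (f ` X) = card E" using card_F E by simp
    moreover have "f ` X \<subseteq> E" by (auto simp: X_def)
    ultimately have "f ` X = E" using \<open>finite E\<close> by (simp add: card_subset_eq)
    then show ?thesis using \<open>X \<in> P\<close> by blast
  qed
  then have "(\<lambda>L. f ` L) ` P = F" using sub by blast
  then show ?thesis using inj unfolding fam_iso_def by blast
qed

lemma inj_on_nth_pred:
  "distinct vs \<Longrightarrow> length vs = n \<Longrightarrow> inj_on (\<lambda>i. vs ! (i - 1)) {1..n}"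
  by (auto simp: inj_on_def nth_eq_iff_index_eq)

lemma blocking_closed_Fano: "blocking_closed 3 Fano"
  unfolding blocking_closed_def Fano_def by code_simp

lemma blocking_closed_T0: "blocking_closed 3 T0"
  unfolding blocking_closed_def T0_def by code_simp

text \<open>Six of the ten triples of \<open>T0\<close>, with \<open>a, b, c, d, x, y\<close> in the roles of \<open>1, \<dots>, 6\<close>.\<close>

definition pair_cycle :: "'a set set \<Rightarrow> 'a \<Rightarrow> 'a \<Rightarrow> 'a \<Rightarrow> 'a \<Rightarrow> 'a \<Rightarrow> 'a \<Rightarrow> bool" where
  "pair_cycle F a b c d x y \<longleftrightarrow> distinct [a,b,c,d,x,y] \<and>
     {{a,b,c},{a,b,d},{c,d,x},{c,d,y},{a,x,y},{b,x,y}} \<subseteq> F"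

lemma pair_cycle_swap:
  assumes "pair_cycle F a b c d x y"
  shows "pair_cycle F b a c d x y" "pair_cycle F a b d c x y" "pair_cycle F a b c d y x"
  using assms unfolding pair_cycle_def by (auto simp: insert_commute)

locale pair_missed_twice =
  fixes F :: "'a set set"
  assumes intersecting: "intersecting F"
    and card_member: "E \<in> F \<Longrightarrow> card E = 3"
    and missed_twice: "T \<in> F \<Longrightarrow> S \<subseteq> T \<Longrightarrow> card S = 2 \<Longrightarrow> 2 \<le> card (avoid F S)"
begin

lemma members_meet: "A \<in> F \<Longrightarrow> B \<in> F \<Longrightarrow> A \<inter> B \<noteq> {}"
  using intersecting unfolding intersecting_def by blast

lemma two_avoiders:
  assumes "T \<in> F" "u \<in> T" "v \<in> T" "u \<noteq> v"
  obtains G1 G2 where "G1 \<in> F" "G2 \<in> F" "G1 \<noteq> G2" "u \<notin> G1" "v \<notin> G1" "u \<notin> G2" "v \<notin> G2"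
proof -
  have two: "2 \<le> card (avoid F {u,v})" using missed_twice[OF assms(1)] assms(2-4) by simp
  then have "finite (avoid F {u,v})" using card.infinite by fastforce
  with two have "\<exists>G1\<in>avoid F {u,v}. \<exists>G2\<in>avoid F {u,v}. G1 \<noteq> G2"
    using card_le_Suc0_iff_eq by fastforce
  with that show ?thesis unfolding avoid_def by auto
qed

lemma Fano_iso:
  assumes "distinct [v1,v2,v3,v4,v5,v6,v7]"
    and "{{v1,v2,v3},{v1,v4,v5},{v1,v6,v7},{v2,v4,v6},{v2,v5,v7},{v3,v5,v6},{v3,v4,v7}} \<subseteq> F"
  shows "fam_iso Fano F"
proof (rule relabelled_blocking_closed_iso[OF blocking_closed_Fano])
  let ?f = "\<lambda>i. [v1,v2,v3,v4,v5,v6,v7] ! (i - 1)"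
  have "\<Union>Fano = {1..7}" by (auto simp: Fano_def)
  then show "inj_on ?f (\<Union>Fano)" using inj_on_nth_pred[OF assms(1), of 7] by simp
  show "(\<lambda>L. ?f ` L) ` Fano \<subseteq> F" using assms(2) by (simp add: Fano_def)
qed (use intersecting card_member in auto)

lemma T0_iso:
  assumes "pair_cycle F a b c d x y" and "{{a,c,x},{a,d,y},{b,c,y},{b,d,x}} \<subseteq> F"
  shows "fam_iso T0 F"
proof (rule relabelled_blocking_closed_iso[OF blocking_closed_T0])
  let ?f = "\<lambda>i. [a,b,c,d,x,y] ! (i - 1)"
  have "\<Union>T0 = {1..6}" by (auto simp: T0_def)
  moreover have "distinct [a,b,c,d,x,y]" using assms(1) unfolding pair_cycle_def by blast
  then have "inj_on ?f {1..6}" by (rule inj_on_nth_pred) simp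
  ultimately show "inj_on ?f (\<Union>T0)" by simp
  show "(\<lambda>L. ?f ` L) ` T0 \<subseteq> F" using assms unfolding pair_cycle_def by (simp add: T0_def)
qed (use intersecting card_member in auto)

lemma pair_cycle_of_shared_pair:
  assumes abc: "{a,b,c} \<in> F" and abd: "{a,b,d} \<in> F" and "distinct [a,b,c,d]"
  obtains x y where "pair_cycle F a b c d x y"
proof -
  obtain E1 E2 where E: "E1 \<in> F" "E2 \<in> F" "E1 \<noteq> E2" "a \<notin> E1" "b \<notin> E1" "a \<notin> E2" "b \<notin> E2"
    using two_avoiders[OF abc, of a b] assms(3) by auto
  have "c \<in> E1" "d \<in> E1" "c \<in> E2" "d \<in> E2"
    using members_meet[OF E(1) abc] members_meet[OF E(1) abd]
      members_meet[OF E(2) abc] members_meet[OF E(2) abd] E by auto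
  then obtain x y where E1: "E1 = {c,d,x}" "x \<noteq> c" "x \<noteq> d"
    and E2: "E2 = {c,d,y}" "y \<noteq> c" "y \<noteq> d"
    using card3_obtain_third[OF card_member] E(1,2) assms(3) by (metis distinct_length_2_or_more)
  have dist: "distinct [a,b,c,d,x,y]" using assms(3) E E1 E2 by auto
  have cdx: "{c,d,x} \<in> F" and cdy: "{c,d,y} \<in> F" using E E1 E2 by auto
  have xy_triple: "G = {a,x,y} \<or> G = {b,x,y}" if G: "G \<in> F" "c \<notin> G" "d \<notin> G" for G
  proof -
    have "x \<in> G" "y \<in> G" "a \<in> G \<or> b \<in> G"
      using members_meet[OF G(1) cdx] members_meet[OF G(1) cdy] members_meet[OF G(1) abc] G by auto
    then show ?thesis
      using card3_eq[OF card_member[OF G(1)], of a x y] card3_eq[OF card_member[OF G(1)], of b x y]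
        dist by auto
  qed
  obtain G1 G2 where "G1 \<in> F" "G2 \<in> F" "G1 \<noteq> G2" "c \<notin> G1" "d \<notin> G1" "c \<notin> G2" "d \<notin> G2"
    using two_avoiders[OF cdx, of c d] dist by auto
  then have "{a,x,y} \<in> F" "{b,x,y} \<in> F" using xy_triple by metis+
  then show ?thesis using that[of x y] dist abc abd cdx cdy unfolding pair_cycle_def by auto
qed

lemma pair_cycle_transversal:
  assumes "pair_cycle F a b c d x y"
  shows "{a,d,x} \<in> F \<or> {a,d,y} \<in> F"
proof -
  have dist: "distinct [a,b,c,d,x,y]" and abc: "{a,b,c} \<in> F" and cdx: "{c,d,x} \<in> F"
    and cdy: "{c,d,y} \<in> F" and bxy: "{b,x,y} \<in> F"
    using assms unfolding pair_cycle_def by auto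
  obtain G1 G2 where G: "G1 \<in> F" "G2 \<in> F" "G1 \<noteq> G2" "b \<notin> G1" "c \<notin> G1" "b \<notin> G2" "c \<notin> G2"
    using two_avoiders[OF abc, of b c] dist by auto
  have "G \<in> {{a,d,x},{a,d,y},{a,x,y}}" if "G \<in> F" "b \<notin> G" "c \<notin> G" for G
    using card3_point_and_two_of[OF card_member[OF that(1)], of a d x y] that dist
      members_meet[OF that(1) abc] members_meet[OF that(1) cdx]
      members_meet[OF that(1) cdy] members_meet[OF that(1) bxy] by auto
  then show ?thesis using G by blast
qed

text \<open>Otherwise a member missing \<open>a\<close> and \<open>x\<close> would have to be \<open>{c,d,y}\<close>.\<close>

lemma pair_cycle_unique_completion:
  assumes "pair_cycle F a b c d x y"
  shows "\<not> ({a,c,x} \<in> F \<and> {a,d,x} \<in> F)"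
proof
  assume acx_adx: "{a,c,x} \<in> F \<and> {a,d,x} \<in> F"
  have dist: "distinct [a,b,c,d,x,y]" and axy: "{a,x,y} \<in> F"
    using assms unfolding pair_cycle_def by auto
  obtain G1 G2 where G: "G1 \<in> F" "G2 \<in> F" "G1 \<noteq> G2" "a \<notin> G1" "x \<notin> G1" "a \<notin> G2" "x \<notin> G2"
    using two_avoiders[OF axy, of a x] dist by auto
  have "G = {c,d,y}" if "G \<in> F" "a \<notin> G" "x \<notin> G" for G
    using card3_eq[OF card_member[OF that(1)], of c d y] that dist acx_adx
      members_meet[OF that(1), of "{a,c,x}"] members_meet[OF that(1), of "{a,d,x}"]
      members_meet[OF that(1) axy] by auto
  then show False using G by metis
qed

lemma pair_cycle_completion:
  assumes cyc: "pair_cycle F a b c d x y"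
  shows "{{a,c,x},{a,d,y},{b,c,y},{b,d,x}} \<subseteq> F \<or> {{a,c,y},{a,d,x},{b,c,x},{b,d,y}} \<subseteq> F"
proof -
  note swap = pair_cycle_swap[OF cyc]
  have dist: "distinct [a,b,c,d,x,y]" using cyc unfolding pair_cycle_def by blast
  have "{a,d,x} \<in> F \<or> {a,d,y} \<in> F" by (rule pair_cycle_transversal[OF cyc])
  moreover have "{b,d,x} \<in> F \<or> {b,d,y} \<in> F" by (rule pair_cycle_transversal[OF swap(1)])
  moreover have "{a,c,x} \<in> F \<or> {a,c,y} \<in> F" by (rule pair_cycle_transversal[OF swap(2)])
  moreover have "{b,c,x} \<in> F \<or> {b,c,y} \<in> F"
    by (rule pair_cycle_transversal[OF pair_cycle_swap(2)[OF swap(1)]])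
  moreover have "\<not> ({a,c,x} \<in> F \<and> {a,d,x} \<in> F)" by (rule pair_cycle_unique_completion[OF cyc])
  moreover have "\<not> ({a,c,y} \<in> F \<and> {a,d,y} \<in> F)" by (rule pair_cycle_unique_completion[OF swap(3)])
  moreover have "\<not> ({a,d,x} \<in> F \<and> {b,c,y} \<in> F)" "\<not> ({a,d,y} \<in> F \<and> {b,c,x} \<in> F)"
    "\<not> ({a,c,x} \<in> F \<and> {b,d,y} \<in> F)" "\<not> ({a,c,y} \<in> F \<and> {b,d,x} \<in> F)"
    using members_meet[of "{a,d,x}" "{b,c,y}"] members_meet[of "{a,d,y}" "{b,c,x}"]
      members_meet[of "{a,c,x}" "{b,d,y}"] members_meet[of "{a,c,y}" "{b,d,x}"] dist by auto
  ultimately show ?thesis by auto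
qed

lemma shared_pair_T0_iso:
  assumes "{a,b,c} \<in> F" "{a,b,d} \<in> F" "distinct [a,b,c,d]"
  shows "fam_iso T0 F"
proof -
  obtain x y where cyc: "pair_cycle F a b c d x y" using pair_cycle_of_shared_pair[OF assms] .
  from pair_cycle_completion[OF cyc] show ?thesis
  proof
    assume "{{a,c,x},{a,d,y},{b,c,y},{b,d,x}} \<subseteq> F"
    then show ?thesis by (rule T0_iso[OF cyc])
  next
    assume "{{a,c,y},{a,d,x},{b,c,x},{b,d,y}} \<subseteq> F"
    then show ?thesis by (rule T0_iso[OF pair_cycle_swap(3)[OF cyc]])
  qed
qed

end

locale linear_pair_missed_twice = pair_missed_twice +
  assumes two_points_determine: "E \<in> F \<Longrightarrow> G \<in> F \<Longrightarrow> {u,v} \<subseteq> E \<inter> G \<Longrightarrow> u \<noteq> v \<Longrightarrow> E = G"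
begin

lemma star_at:
  assumes abc: "{a,b,c} \<in> F" and "distinct [a,b,c]"
  obtains p1 q1 p2 q2 where "distinct [a,b,c,p1,q1,p2,q2]" "{a,p1,q1} \<in> F" "{a,p2,q2} \<in> F"
proof -
  obtain A1 A2 where A: "A1 \<in> F" "A2 \<in> F" "A1 \<noteq> A2" "b \<notin> A1" "c \<notin> A1" "b \<notin> A2" "c \<notin> A2"
    using two_avoiders[OF abc, of b c] assms(2) by auto
  have "a \<in> A1" "a \<in> A2" using members_meet[OF A(1) abc] members_meet[OF A(2) abc] A by auto
  then obtain p1 q1 p2 q2 where A1: "A1 = {a,p1,q1}" "distinct [a,p1,q1]"
    and A2: "A2 = {a,p2,q2}" "distinct [a,p2,q2]"
    using card3_obtain_rest[OF card_member[OF A(1)]] card3_obtain_rest[OF card_member[OF A(2)]]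
    by metis
  have "p1 \<notin> A2" "q1 \<notin> A2"
    using two_points_determine[OF A(1) A(2), of a] A(3) A1 \<open>a \<in> A2\<close> by auto
  then have "distinct [a,b,c,p1,q1,p2,q2]" using assms(2) A A1 A2 by auto
  then show ?thesis using that A A1 A2 by auto
qed

lemma star_matching:
  assumes abc: "{a,b,c} \<in> F" and A1: "{a,p1,q1} \<in> F" and A2: "{a,p2,q2} \<in> F"
    and dist: "distinct [a,b,c,p1,q1,p2,q2]"
  shows "({b,p1,p2} \<in> F \<and> {b,q1,q2} \<in> F) \<or> ({b,p1,q2} \<in> F \<and> {b,q1,p2} \<in> F)"
proof -
  have through_b: "\<exists>p\<in>{p1,q1}. \<exists>q\<in>{p2,q2}. G = {b,p,q}"
    if G: "G \<in> F" "a \<notin> G" "c \<notin> G" for G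
  proof (rule card3_point_and_transversal[OF card_member[OF G(1)]])
    show "b \<in> G" "G \<inter> {p1,q1} \<noteq> {}" "G \<inter> {p2,q2} \<noteq> {}"
      using members_meet[OF G(1) abc] members_meet[OF G(1) A1] members_meet[OF G(1) A2] G by auto
  qed (use dist in auto)
  obtain B1 B2 where B: "B1 \<in> F" "B2 \<in> F" "B1 \<noteq> B2" "a \<notin> B1" "c \<notin> B1" "a \<notin> B2" "c \<notin> B2"
    using two_avoiders[OF abc, of a c] dist by auto
  then obtain p q p' q' where B1: "B1 = {b,p,q}" "p \<in> {p1,q1}" "q \<in> {p2,q2}"
    and B2: "B2 = {b,p',q'}" "p' \<in> {p1,q1}" "q' \<in> {p2,q2}"
    using through_b by meson
  have "p \<noteq> p'" "q \<noteq> q'"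
    using two_points_determine[OF B(1) B(2), of b] B(3) B1 B2 dist by auto
  then show ?thesis using B B1 B2 by auto
qed

lemma Fano_completion:
  assumes abc: "{a,b,c} \<in> F" and "{a,p1,q1} \<in> F" "{a,p2,q2} \<in> F"
    and "{b,p1,p2} \<in> F" "{b,q1,q2} \<in> F" and dist: "distinct [a,b,c,p1,q1,p2,q2]"
  shows "{c,p1,q2} \<in> F \<and> {c,q1,p2} \<in> F"
proof -
  have "G = {c,p1,q2} \<or> G = {c,q1,p2}" if G: "G \<in> F" "a \<notin> G" "b \<notin> G" for G
  proof -
    have "c \<in> G" "G \<inter> {p1,q1} \<noteq> {}" "G \<inter> {p2,q2} \<noteq> {}"
      "G \<inter> {p1,p2} \<noteq> {}" "G \<inter> {q1,q2} \<noteq> {}"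
      using members_meet[OF G(1) abc] members_meet[OF G(1) assms(2)] members_meet[OF G(1) assms(3)]
        members_meet[OF G(1) assms(4)] members_meet[OF G(1) assms(5)] G by auto
    then show ?thesis
      using card3_point_and_transversal[OF card_member[OF G(1)], of c "{p1,q1}" "{p2,q2}"] dist by auto
  qed
  moreover obtain G1 G2
    where "G1 \<in> F" "G2 \<in> F" "G1 \<noteq> G2" "a \<notin> G1" "b \<notin> G1" "a \<notin> G2" "b \<notin> G2"
    using two_avoiders[OF abc, of a b] dist by auto
  ultimately show ?thesis by metis
qed

lemma Fano_iso_of_star:
  assumes "{a,b,c} \<in> F" "{a,p1,q1} \<in> F" "{a,p2,q2} \<in> F"
    and "{b,p1,p2} \<in> F" "{b,q1,q2} \<in> F" and "distinct [a,b,c,p1,q1,p2,q2]"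
  shows "fam_iso Fano F"
  using Fano_iso[OF assms(6)] Fano_completion[OF assms] assms(1-5) by simp

lemma Fano_iso_of_linear:
  assumes "F \<noteq> {}"
  shows "fam_iso Fano F"
proof -
  obtain T where "T \<in> F" using assms by blast
  then obtain a b c where abc: "{a,b,c} \<in> F" "distinct [a,b,c]"
    using card_member by (fastforce simp: card_3_iff)
  obtain p1 q1 p2 q2 where dist: "distinct [a,b,c,p1,q1,p2,q2]"
    and A1: "{a,p1,q1} \<in> F" and A2: "{a,p2,q2} \<in> F"
    using star_at[OF abc] .
  from star_matching[OF abc(1) A1 A2 dist] show ?thesis
  proof
    assume "{b,p1,p2} \<in> F \<and> {b,q1,q2} \<in> F"
    then show ?thesis using Fano_iso_of_star[OF abc(1) A1 A2 _ _ dist] by blast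
  next
    assume "{b,p1,q2} \<in> F \<and> {b,q1,p2} \<in> F"
    moreover have "{a,q2,p2} \<in> F" "distinct [a,b,c,p1,q1,q2,p2]"
      using A2 dist by (auto simp: insert_commute)
    ultimately show ?thesis using Fano_iso_of_star[OF abc(1) A1] by blast
  qed
qed

end

theorem (in pair_missed_twice) Fano_or_T0_iso:
  assumes "F \<noteq> {}"
  shows "fam_iso Fano F \<or> fam_iso T0 F"
proof (cases "\<exists>E\<in>F. \<exists>G\<in>F. \<exists>u v. E \<noteq> G \<and> u \<noteq> v \<and> {u,v} \<subseteq> E \<inter> G")
  case True
  then obtain E G u v where EG: "E \<in> F" "G \<in> F" "E \<noteq> G" "u \<noteq> v" "{u,v} \<subseteq> E \<inter> G" by blast
  obtain w where E: "E = {u,v,w}" "w \<noteq> u" "w \<noteq> v"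
    using card3_obtain_third[OF card_member[OF EG(1)], of u v] EG by auto
  obtain z where G: "G = {u,v,z}" "z \<noteq> u" "z \<noteq> v"
    using card3_obtain_third[OF card_member[OF EG(2)], of u v] EG by auto
  have "distinct [u,v,w,z]" using E G EG by auto
  then have "fam_iso T0 F" using shared_pair_T0_iso EG E G by blast
  then show ?thesis ..
next
  case False
  then interpret linear_pair_missed_twice F by unfold_locales blast
  show ?thesis using Fano_iso_of_linear[OF assms] ..
qed

theorem lemma3p1:
  fixes n :: nat and \<T> :: "nat set set"
  assumes "\<T> \<noteq> {}"
    and "\<T> \<subseteq> {T. T \<subseteq> {1..n} \<and> card T = 3}"
    and "intersecting \<T>"
  shows "fam_iso Fano \<T> \<or> fam_iso T0 \<T> \<or>
         (\<exists>T\<in>\<T>. \<exists>S. S \<subseteq> T \<and> card S = 2 \<and> card (avoid \<T> S) \<le> 1)"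
proof (rule ccontr)
  assume neg: "\<not> ?thesis"
  have "pair_missed_twice \<T>"
  proof
    show "intersecting \<T>" by fact
    show "card E = 3" if "E \<in> \<T>" for E using assms(2) that by blast
    show "2 \<le> card (avoid \<T> S)" if "T \<in> \<T>" "S \<subseteq> T" "card S = 2" for T S
      using neg that by force
  qed
  then have "fam_iso Fano \<T> \<or> fam_iso T0 \<T>"
    using assms(1) by (rule pair_missed_twice.Fano_or_T0_iso)
  with neg show False by blast
qed

end
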